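(* Let $n$, $U=U_{n+1}$, $E_{\mathcal M}$, $F^{\mathcal M}$, $E_{\mathcal M_1\cdots\mathcal M_k}$, $F^{\mathcal N_1\cdots\mathcal N_k}$ and $\mathbb{P}_k$ be as in the context. Let $p\ge2$ and suppose there are real numbers $a_k$ ($k=2,\dots,p$) with $\langle E_{\mathcal M_1\cdots\mathcal M_k}|F^{\mathcal N_1\cdots\mathcal N_k}\rangle=a_k(\mathbb{P}_k)_{\mathcal M_1\cdots\mathcal M_k}{}^{\mathcal N_1\cdots\mathcal N_k}$ for $k=2,\dots,p$; put $a_1=1$ and $\mathbb{P}_1=\delta$. For $k=1,\dots,p$ define $${\tt Y}^{\mathcal N_1\cdots\mathcal N_k}{}_{\mathcal M_1\cdots\mathcal M_{k+1}}=\frac1{a_k}[F^{\mathcal N_1\cdots\mathcal N_k},E_{\mathcal M_1\cdots\mathcal M_{k+1}}],\qquad {\tt X}_{\mathcal M|\mathcal N_1\cdots\mathcal N_k}{}^{\mathcal P_1\cdots\mathcal P_k}=\frac1{a_k}[E_{\mathcal M},[\![E_{\mathcal N_1\cdots\mathcal N_k},F^{\mathcal P_1\cdots\mathcal P_k}]\!]]$$ (with $E_{\mathcal N_1}$, $F^{\mathcal P_1}$ meaning the basis elements when $k=1$). Then, summing over repeated indices, $${\tt X}_{\mathcal M|\mathcal N_1\cdots\mathcal N_p}{}^{\mathcal P_1\cdots\mathcal P_p}=(\mathbb{P}_p)_{\mathcal K_1\cdots\mathcal K_p}{}^{\mathcal P_1\cdots\mathcal P_p}\sum_{i=1}^p\delta_{\mathcal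 N_1}{}^{\mathcal K_1}\cdots\delta_{\mathcal N_{i-1}}{}^{\mathcal K_{i-1}}{\tt X}_{\mathcal M|\mathcal N_i}{}^{\mathcal K_i}\delta_{\mathcal N_{i+1}}{}^{\mathcal K_{i+1}}\cdots\delta_{\mathcal N_p}{}^{\mathcal K_p},$$ $${\tt Y}^{\mathcal N_1\cdots\mathcal N_p}{}_{\mathcal M_1\cdots\mathcal M_{p+1}}=-(\mathbb{P}_p)_{\mathcal K_1\cdots\mathcal K_p}{}^{\mathcal N_1\cdots\mathcal N_p}\delta_{\mathcal M_1}{}^{\mathcal K_1}{\tt Y}^{\mathcal K_2\cdots\mathcal K_p}{}_{\mathcal M_2\cdots\mathcal M_{p+1}}-{\tt X}_{\mathcal M_1|\mathcal M_2\cdots\mathcal M_{p+1}}{}^{\mathcal N_1\cdots\mathcal N_p},$$ $${\tt Y}^{\mathcal M}{}_{\mathcal N\mathcal P}=-{\tt X}_{\mathcal N|\mathcal P}{}^{\mathcal M}-{\tt X}_{\mathcal P|\mathcal N}{}^{\mathcal M}.$$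
   Context: Fix an integer $n$ with $4\le n\le 8$. $E_n$ denotes the split real Lie algebra with Dynkin diagram on nodes $1,\dots,n$, where nodes $1,\dots,n-1$ form a chain and node $n$ is joined to node $n-3$. Extend this diagram by a node $0$ joined to node $1$, and let $A=(A_{IJ})_{I,J=0,\dots,n}$ with $A_{00}=0$, $A_{ii}=2$ for $i\ge1$, $A_{IJ}=-1$ if $I\neq J$ are joined and $0$ otherwise. Let $\tilde U$ be the real Lie superalgebra generated by $e_I,f_I,h_I$ ($I=0,\dots,n$), all even except $e_0,f_0$ which are odd, subject to $[\![h_I,e_J]\!]=A_{IJ}e_J$, $[\![h_I,f_J]\!]=-A_{IJ}f_J$, $[\![e_I,f_J]\!]=\delta_{IJ}h_J$, $[\![h_I,h_J]\!]=0$, where $[\![x,y]\!]$ is the superbracket (written $\{x,y\}$ when both are odd, where it is symmetric, and $[x,y]$ otherwise). $U=U_{n+1}$ is the quotient of $\tilde U$ by its maximal ideal intersecting $\mathrm{span}\{h_I\}$ trivially (equivalently by the ideal generated by $(\mathrm{ad}\,e_i)^{1-A_{iJ}}(e_J)$, $(\mathrm{ad}\,f_i)^{1-A_{iJ}}(f_J)$, $i=1,\dots,n$, $J=0,\dots,n$). $U=\bigoplus_p U_p$ is $\mathbb{Z}$-graded with $e_0\in U_{-1}$, $f_0\in U_1$, all other generators in $U_0$; $U_p$ has parity $p\bmod 2$ and $[\![U_p,U_q]\!]\subseteq U_{p+q}$. Each $U_p$ is a module over the subalgebra $E_n$ generated by $e_i,f_i,h_i$ ($i\ge1$). $U$ carries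 an invariant, supersymmetric bilinear form $\langle\cdot|\cdot\rangle$ with $\langle U_p|U_q\rangle=0$ unless $p+q=0$, $\langle h_I|h_J\rangle=A_{IJ}$, $\langle e_I|f_J\rangle=\delta_{IJ}$, $\langle e_I|e_J\rangle=\langle f_I|f_J\rangle=0$. Choose bases $\{E_{\mathcal M}\}$ of $U_{-1}$ and $\{F^{\mathcal M}\}$ of $U_1$ with $\langle E_{\mathcal M}|F^{\mathcal N}\rangle=\delta_{\mathcal M}{}^{\mathcal N}$. For $k\ge2$ set $E_{\mathcal M_1\cdots\mathcal M_k}=[\![E_{\mathcal M_1},[\![E_{\mathcal M_2},\ldots,[\![E_{\mathcal M_{k-1}},E_{\mathcal M_k}]\!]\cdots]\!]]\!]$ and $F^{\mathcal M_1\cdots\mathcal M_k}$ analogously with $F$'s; these span $U_{-k}$ and $U_k$. For $k\ge2$, $\mathbb{P}_k$ is the projector onto the $E_n$-representation $U_{-k}$ inside the $k$-fold tensor power of $U_{-1}$: an array $(\mathbb{P}_k)_{\mathcal M_1\cdots\mathcal M_k}{}^{\mathcal N_1\cdots\mathcal N_k}$, idempotent as a matrix, with $E_{\mathcal M_1\cdots\mathcal M_k}=(\mathbb{P}_k)_{\mathcal M_1\cdots\mathcal M_k}{}^{\mathcal N_1\cdots\mathcal N_k}E_{\mathcal N_1\cdots\mathcal N_k}$ and $F^{\mathcal N_1\cdots\mathcal N_k}=(\mathbb{P}_k)_{\mathcal M_1\cdots\mathcal M_k}{}^{\mathcal N_1\cdots\mathcal N_k}F^{\mathcal M_1\cdots\mathcal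 M_k}$. *)

theory Defs
  imports "HOL-Analysis.Analysis"
begin

text \<open>Nodes 0..n. Edges: I -- I+1 for I = 0..n-2 (the chain 0,1,...,n-1,
  where node 0 is the extra node joined to node 1), and n -- n-3.\<close>
definition dynkin_edge :: "nat \<Rightarrow> nat \<Rightarrow> nat \<Rightarrow> bool" where
  "dynkin_edge n I J \<longleftrightarrow>
     (I \<le> n \<and> J \<le> n) \<and>
     ((J = I + 1 \<and> J \<le> n - 1) \<or> (I = J + 1 \<and> I \<le> n - 1) \<or>
      (I = n \<and> J = n - 3) \<or> (J = n \<and> I = n - 3))"

definition cartanA :: "nat \<Rightarrow> nat \<Rightarrow> nat \<Rightarrow> real" where
  "cartanA n I J =
     (if I = J then (if I = 0 then 0 else 2)
      else if dynkin_edge n I J then -1 else 0)"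

text \<open>Sign (-1)^(|x||y|) for x of degree p and y of degree q (parity = degree mod 2).\<close>
definition ssign :: "int \<Rightarrow> int \<Rightarrow> real" where
  "ssign p q = (if odd p \<and> odd q then -1 else 1)"

text \<open>U is modelled as a real vector space (the whole type 'u) with a bilinear
  superbracket br, a Z-grading Ugr (U = direct sum of the Ugr p, Ugr p of parity p mod 2),
  and generators e I, f I, h I (I = 0..n).  It is characterised (up to isomorphism)
  as a Z-graded Lie superalgebra generated by the e,f,h subject to the defining
  relations, with the h I linearly independent, and without nonzero graded ideals
  meeting span{h I} trivially (i.e. it is the quotient of the free algebra by its
  maximal ideal meeting span{h} trivially).\<close>

definition graded_decomp :: "(int \<Rightarrow> 'u::real_vector set) \<Rightarrow> bool" where
  "graded_decomp Ugr \<longleftrightarrow>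
     (\<forall>p. subspace (Ugr p)) \<and>
     (\<forall>x. \<exists>!c :: int \<Rightarrow> 'u. finite {p. c p \<noteq> 0} \<and> (\<forall>p. c p \<in> Ugr p) \<and>
            x = (\<Sum>p\<in>{p. c p \<noteq> 0}. c p))"

definition lie_superalgebra ::
  "('u::real_vector \<Rightarrow> 'u \<Rightarrow> 'u) \<Rightarrow> (int \<Rightarrow> 'u set) \<Rightarrow> bool" where
  "lie_superalgebra br Ugr \<longleftrightarrow>
     bilinear br \<and> graded_decomp Ugr \<and>
     (\<forall>p q x y. x \<in> Ugr p \<longrightarrow> y \<in> Ugr q \<longrightarrow> br x y \<in> Ugr (p + q)) \<and>
     (\<forall>p q x y. x \<in> Ugr p \<longrightarrow> y \<in> Ugr q \<longrightarrow> br x y = - (ssign p q *\<^sub>R br y x)) \<and>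
     (\<forall>p q x y z. x \<in> Ugr p \<longrightarrow> y \<in> Ugr q \<longrightarrow>
        br x (br y z) = br (br x y) z + ssign p q *\<^sub>R br y (br x z))"

definition is_ideal :: "('u::real_vector \<Rightarrow> 'u \<Rightarrow> 'u) \<Rightarrow> 'u set \<Rightarrow> bool" where
  "is_ideal br J \<longleftrightarrow> subspace J \<and> (\<forall>x\<in>J. \<forall>y. br x y \<in> J \<and> br y x \<in> J)"

definition graded_subspace :: "(int \<Rightarrow> 'u::real_vector set) \<Rightarrow> 'u set \<Rightarrow> bool" where
  "graded_subspace Ugr J \<longleftrightarrow> J = span (\<Union>p. J \<inter> Ugr p)"

definition is_U ::
  "nat \<Rightarrow> ('u::real_vector \<Rightarrow> 'u \<Rightarrow> 'u) \<Rightarrow> (int \<Rightarrow> 'u set) \<Rightarrow>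
   (nat \<Rightarrow> 'u) \<Rightarrow> (nat \<Rightarrow> 'u) \<Rightarrow> (nat \<Rightarrow> 'u) \<Rightarrow> bool" where
  "is_U n br Ugr e f h \<longleftrightarrow>
     lie_superalgebra br Ugr \<and>
     \<comment> \<open>degrees of the generators\<close>
     e 0 \<in> Ugr (-1) \<and> f 0 \<in> Ugr 1 \<and>
     (\<forall>i\<in>{1..n}. e i \<in> Ugr 0 \<and> f i \<in> Ugr 0) \<and>
     (\<forall>I\<le>n. h I \<in> Ugr 0) \<and>
     \<comment> \<open>defining relations\<close>
     (\<forall>I\<le>n. \<forall>J\<le>n.
        br (h I) (e J) = cartanA n I J *\<^sub>R e J \<and>
        br (h I) (f J) = - (cartanA n I J *\<^sub>R f J) \<and>
        br (e I) (f J) = (if I = J then h J else 0) \<and>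
        br (h I) (h J) = 0) \<and>
     \<comment> \<open>generation\<close>
     (\<forall>S. subspace S \<longrightarrow> e ` {..n} \<subseteq> S \<longrightarrow> f ` {..n} \<subseteq> S \<longrightarrow> h ` {..n} \<subseteq> S \<longrightarrow>
          (\<forall>x\<in>S. \<forall>y\<in>S. br x y \<in> S) \<longrightarrow> S = UNIV) \<and>
     \<comment> \<open>the h I are linearly independent\<close>
     inj_on h {..n} \<and> independent (h ` {..n}) \<and>
     \<comment> \<open>quotient by the maximal ideal meeting span h trivially\<close>
     (\<forall>J. is_ideal br J \<longrightarrow> graded_subspace Ugr J \<longrightarrow>
          J \<inter> span (h ` {..n}) = {0} \<longrightarrow> J = {0})"

definition is_U_form ::
  "nat \<Rightarrow> ('u::real_vector \<Rightarrow> 'u \<Rightarrow> 'u) \<Rightarrow> (int \<Rightarrow> 'u set) \<Rightarrow>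
   (nat \<Rightarrow> 'u) \<Rightarrow> (nat \<Rightarrow> 'u) \<Rightarrow> (nat \<Rightarrow> 'u) \<Rightarrow> ('u \<Rightarrow> 'u \<Rightarrow> real) \<Rightarrow> bool" where
  "is_U_form n br Ugr e f h form \<longleftrightarrow>
     bilinear form \<and>
     (\<forall>x y z. form (br x y) z = form x (br y z)) \<and>
     (\<forall>p q x y. x \<in> Ugr p \<longrightarrow> y \<in> Ugr q \<longrightarrow> form x y = ssign p q * form y x) \<and>
     (\<forall>p q x y. x \<in> Ugr p \<longrightarrow> y \<in> Ugr q \<longrightarrow> p + q \<noteq> 0 \<longrightarrow> form x y = 0) \<and>
     (\<forall>I\<le>n. \<forall>J\<le>n.
        form (h I) (h J) = cartanA n I J \<and>
        form (e I) (f J) = (if I = J then 1 else 0) \<and>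
        form (e I) (e J) = 0 \<and> form (f I) (f J) = 0)"

definition is_basis_of :: "nat \<Rightarrow> (nat \<Rightarrow> 'u::real_vector) \<Rightarrow> 'u set \<Rightarrow> bool" where
  "is_basis_of d B V \<longleftrightarrow> inj_on B {..<d} \<and> independent (B ` {..<d}) \<and> span (B ` {..<d}) = V"

definition dual_bases ::
  "(int \<Rightarrow> 'u::real_vector set) \<Rightarrow> ('u \<Rightarrow> 'u \<Rightarrow> real) \<Rightarrow> nat \<Rightarrow> (nat \<Rightarrow> 'u) \<Rightarrow> (nat \<Rightarrow> 'u) \<Rightarrow> bool" where
  "dual_bases Ugr form d E F \<longleftrightarrow>
     is_basis_of d E (Ugr (-1)) \<and> is_basis_of d F (Ugr 1) \<and>
     (\<forall>M<d. \<forall>N<d. form (E M) (F N) = (if M = N then 1 else 0))"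

fun mbr :: "('u \<Rightarrow> 'u \<Rightarrow> 'u) \<Rightarrow> (nat \<Rightarrow> 'u) \<Rightarrow> nat list \<Rightarrow> 'u::real_vector" where
  "mbr br B [] = 0"
| "mbr br B [M] = B M"
| "mbr br B (M # Ms) = br (B M) (mbr br B Ms)"

definition idx :: "nat \<Rightarrow> nat \<Rightarrow> nat list set" where
  "idx d k = {Ms. length Ms = k \<and> set Ms \<subseteq> {..<d}}"

definition kd :: "nat \<Rightarrow> nat \<Rightarrow> real" where
  "kd M N = (if M = N then 1 else 0)"

text \<open>P is the projector for level k: P Ms Ns = (P_k)_{Ms}^{Ns}.\<close>
definition is_projector ::
  "('u::real_vector \<Rightarrow> 'u \<Rightarrow> 'u) \<Rightarrow> nat \<Rightarrow> (nat \<Rightarrow> 'u) \<Rightarrow> (nat \<Rightarrow> 'u) \<Rightarrow> nat \<Rightarrow>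
   (nat list \<Rightarrow> nat list \<Rightarrow> real) \<Rightarrow> bool" where
  "is_projector br d E F k P \<longleftrightarrow>
     (\<forall>Ms\<in>idx d k. \<forall>Ns\<in>idx d k. (\<Sum>Ks\<in>idx d k. P Ms Ks * P Ks Ns) = P Ms Ns) \<and>
     (\<forall>Ms\<in>idx d k. mbr br E Ms = (\<Sum>Ns\<in>idx d k. P Ms Ns *\<^sub>R mbr br E Ns)) \<and>
     (\<forall>Ns\<in>idx d k. mbr br F Ns = (\<Sum>Ms\<in>idx d k. P Ms Ns *\<^sub>R mbr br F Ms))"

text \<open>Ycomp k Ns Ms = Y^{Ns}_{Ms}, Ns of length k, Ms of length k+1.\<close>
definition Ycomp ::
  "('u::real_vector \<Rightarrow> 'u \<Rightarrow> 'u) \<Rightarrow> (nat \<Rightarrow> real) \<Rightarrow> (nat \<Rightarrow> 'u) \<Rightarrow> (nat \<Rightarrow> 'u) \<Rightarrow>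
   nat \<Rightarrow> nat list \<Rightarrow> nat list \<Rightarrow> 'u" where
  "Ycomp br a E F k Ns Ms = (1 / a k) *\<^sub>R br (mbr br F Ns) (mbr br E Ms)"

text \<open>Xcomp k M Ns Ps = X_{M|Ns}^{Ps}, Ns and Ps of length k.\<close>
definition Xcomp ::
  "('u::real_vector \<Rightarrow> 'u \<Rightarrow> 'u) \<Rightarrow> (nat \<Rightarrow> real) \<Rightarrow> (nat \<Rightarrow> 'u) \<Rightarrow> (nat \<Rightarrow> 'u) \<Rightarrow>
   nat \<Rightarrow> nat \<Rightarrow> nat list \<Rightarrow> nat list \<Rightarrow> 'u" where
  "Xcomp br a E F k M Ns Ps = (1 / a k) *\<^sub>R br (E M) (br (mbr br E Ns) (mbr br F Ps))"

end

theory Submission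
  imports Defs
begin

text \<open>
  The hypothesis <E_Ms|F^Ns> = a_k (P_k)_Ms^Ns makes the pairing between the brackets of level -k
  and those of level k non-degenerate on the span of the F^Ns, so elements are identified by their
  pairings. For X: D = [E_M, F^Q] has degree 0 and acts as a derivation on nested brackets, and
  invariance of the form turns <X_M|Ns^Ps | F^Q> into the pairing of [D, E_Ns] with F^Ps, which is
  a sum over the slots of Ns. For Y: pairing with the E_Ls of level p-1 identifies [F^Ns, E_M] as
  -(a_p / a_(p-1)) (P_p)_Ks^Ns delta_M^(K_1) F^(K_2...K_p), and the super-Jacobi identity for
  [F^Ns, [E_M, E_Ms]] turns this into the recursion; for p = 1 the Jacobi identity alone suffices.
\<close>

lemma bilinear_sum_left: "bilinear h \<Longrightarrow> h (sum f S) y = (\<Sum>x\<in>S. h (f x) y)"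
  using linear_sum[of "\<lambda>x. h x y" f S] by (simp add: bilinear_def comp_def)

lemma bilinear_sum_right: "bilinear h \<Longrightarrow> h y (sum f S) = (\<Sum>x\<in>S. h y (f x))"
  using linear_sum[of "h y" f S] by (simp add: bilinear_def comp_def)

lemma span_image_finite_sum:
  assumes "finite S" and "y \<in> span (g ` S)"
  shows "\<exists>c. y = (\<Sum>s\<in>S. c s *\<^sub>R g s)"
  using assms(2)
proof (induction rule: span_induct_alt)
  case base
  show ?case by (intro exI[of _ "\<lambda>_. 0"]) simp
next
  case (step a x y)
  then obtain s0 c where s0: "s0 \<in> S" "x = g s0" and c: "y = (\<Sum>s\<in>S. c s *\<^sub>R g s)"
    by blast
  have "a *\<^sub>R x + y = (\<Sum>s\<in>S. (c s + (if s = s0 then a else 0)) *\<^sub>R g s)"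
    using s0 c assms(1)
    by (simp add: scaleR_add_left sum.distrib if_distrib[of "\<lambda>r. r *\<^sub>R _"] cong: if_cong)
  then show ?case by (intro exI[of _ "\<lambda>s. c s + (if s = s0 then a else 0)"])
qed

lemma mbr_Cons: "Ks \<noteq> [] \<Longrightarrow> mbr br B (K # Ks) = br (B K) (mbr br B Ks)"
  by (cases Ks) auto

lemma ssign_zero_left [simp]: "ssign 0 q = 1"
  and ssign_zero_right [simp]: "ssign p 0 = 1"
  by (auto simp: ssign_def)

lemma finite_idx: "finite (idx d k)"
proof -
  have "idx d k = {xs. set xs \<subseteq> {..<d} \<and> length xs = k}" by (auto simp: idx_def)
  then show ?thesis using finite_lists_length_eq[of "{..<d}" k] by simp
qed

lemma idx_one: "idx d 1 = (\<lambda>N. [N]) ` {..<d}"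
  by (auto simp: idx_def length_Suc_conv)

lemma idx_nth_less: "Ks \<in> idx d k \<Longrightarrow> i < k \<Longrightarrow> Ks ! i < d"
  by (auto simp: idx_def set_conv_nth)

lemma idx_list_update: "Ks \<in> idx d k \<Longrightarrow> K < d \<Longrightarrow> Ks[i := K] \<in> idx d k"
  using set_update_subset_insert[of Ks i K] by (auto simp: idx_def)

lemma Cons_in_idx_iff: "M # Ks \<in> idx d (Suc k) \<longleftrightarrow> M < d \<and> Ks \<in> idx d k"
  by (auto simp: idx_def)

lemma tl_in_idx: "Ks \<in> idx d (Suc k) \<Longrightarrow> tl Ks \<in> idx d k"
  by (cases Ks) (auto simp: idx_def)

lemma idx_nonempty: "Ks \<in> idx d k \<Longrightarrow> 1 \<le> k \<Longrightarrow> Ks \<noteq> []"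
  by (auto simp: idx_def)

lemma sum_kd_left: "K < d \<Longrightarrow> (\<Sum>L<d. f L * kd L K) = f K"
  by (simp add: kd_def if_distrib[of "(*) _"] cong: if_cong)

lemma sum_idx_kd_hd:
  assumes "M < d"
  shows "(\<Sum>Ks\<in>idx d (Suc m). kd M (hd Ks) * g Ks) = (\<Sum>Ks\<in>idx d m. g (M # Ks))"
proof -
  have sub: "(#) M ` idx d m \<subseteq> idx d (Suc m)" using assms by (auto simp: idx_def)
  have "kd M (hd Ks) * g Ks = 0" if "Ks \<in> idx d (Suc m) - (#) M ` idx d m" for Ks
    using that by (cases Ks) (auto simp: idx_def kd_def)
  then have "(\<Sum>Ks\<in>idx d (Suc m). kd M (hd Ks) * g Ks) = (\<Sum>Ks\<in>(#) M ` idx d m. kd M (hd Ks) * g Ks)"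
    by (intro sum.mono_neutral_right[OF finite_idx sub]) blast
  also have "\<dots> = (\<Sum>Ks\<in>idx d m. g (M # Ks))"
    by (subst sum.reindex) (auto simp: kd_def)
  finally show ?thesis .
qed

lemma sum_idx_kd_except:
  assumes i: "i < k" and Ns: "Ns \<in> idx d k"
  shows "(\<Sum>Ks\<in>idx d k. g Ks * (\<Prod>j\<in>{..<k} - {i}. kd (Ns ! j) (Ks ! j)) * h (Ks ! i))
       = (\<Sum>K<d. g (Ns[i := K]) * h K)"
proof -
  let ?upd = "\<lambda>K. Ns[i := K]"
  let ?\<delta> = "\<lambda>Ks. \<Prod>j\<in>{..<k} - {i}. kd (Ns ! j) (Ks ! j)"
  have len: "length Ns = k" using Ns by (simp add: idx_def)
  have sub: "?upd ` {..<d} \<subseteq> idx d k" using idx_list_update[OF Ns] by auto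
  have "?\<delta> Ks = 0" if Ks: "Ks \<in> idx d k - ?upd ` {..<d}" for Ks
  proof -
    have lenK: "length Ks = k" using Ks by (simp add: idx_def)
    have "Ks \<noteq> Ns[i := Ks ! i]" using Ks idx_nth_less[of Ks d k i] i by blast
    then obtain j where j: "j < k" "Ks ! j \<noteq> Ns[i := Ks ! i] ! j"
      using lenK len by (metis length_list_update nth_equalityI)
    have "j \<noteq> i" using j i len by auto
    with j len have "j \<in> {..<k} - {i}" "kd (Ns ! j) (Ks ! j) = 0"
      by (auto simp: kd_def)
    then show ?thesis by (intro prod_zero) auto
  qed
  then have "(\<Sum>Ks\<in>idx d k. g Ks * ?\<delta> Ks * h (Ks ! i))
      = (\<Sum>Ks\<in>?upd ` {..<d}. g Ks * ?\<delta> Ks * h (Ks ! i))"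
    by (intro sum.mono_neutral_right[OF finite_idx sub]) auto
  also have "\<dots> = (\<Sum>K<d. g (Ns[i := K]) * ?\<delta> (Ns[i := K]) * h K)"
    using i len by (subst sum.reindex) (auto simp: inj_on_def dest: arg_cong[of _ _ "\<lambda>xs. xs ! i"])
  also have "\<dots> = (\<Sum>K<d. g (Ns[i := K]) * h K)"
    by (intro sum.cong refl) (simp add: kd_def)
  finally show ?thesis .
qed

locale dual_graded_superalgebra =
  fixes br :: "'u::real_vector \<Rightarrow> 'u \<Rightarrow> 'u" and Ugr :: "int \<Rightarrow> 'u set"
    and form :: "'u \<Rightarrow> 'u \<Rightarrow> real" and d :: nat and E F :: "nat \<Rightarrow> 'u"
  assumes lie: "lie_superalgebra br Ugr"
    and form_bilinear: "bilinear form"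
    and form_invariant: "\<And>x y z. form (br x y) z = form x (br y z)"
    and form_supersymmetric: "\<And>p q x y. x \<in> Ugr p \<Longrightarrow> y \<in> Ugr q \<Longrightarrow> form x y = ssign p q * form y x"
    and bases: "dual_bases Ugr form d E F"
begin

lemma br_bilinear: "bilinear br"
  using lie by (simp add: lie_superalgebra_def)

lemma subspace_Ugr: "subspace (Ugr p)"
  using lie by (simp add: lie_superalgebra_def graded_decomp_def)

lemma br_in_Ugr: "x \<in> Ugr p \<Longrightarrow> y \<in> Ugr q \<Longrightarrow> p + q = r \<Longrightarrow> br x y \<in> Ugr r"
  using lie unfolding lie_superalgebra_def by blast

lemma br_antisym: "x \<in> Ugr p \<Longrightarrow> y \<in> Ugr q \<Longrightarrow> br x y = - (ssign p q *\<^sub>R br y x)"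
  using lie unfolding lie_superalgebra_def by blast

lemma br_jacobi:
  "x \<in> Ugr p \<Longrightarrow> y \<in> Ugr q \<Longrightarrow> br x (br y z) = br (br x y) z + ssign p q *\<^sub>R br y (br x z)"
  using lie unfolding lie_superalgebra_def by blast

lemma span_E: "span (E ` {..<d}) = Ugr (-1)"
  and span_F: "span (F ` {..<d}) = Ugr 1"
  using bases by (auto simp: dual_bases_def is_basis_of_def)

lemma form_E_F: "M < d \<Longrightarrow> N < d \<Longrightarrow> form (E M) (F N) = kd M N"
  using bases by (auto simp: dual_bases_def kd_def)

lemma E_in_Ugr: "M < d \<Longrightarrow> E M \<in> Ugr (-1)"
  using span_E span_base[of "E M" "E ` {..<d}"] by auto

lemma F_in_Ugr: "M < d \<Longrightarrow> F M \<in> Ugr 1"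
  using span_F span_base[of "F M" "F ` {..<d}"] by auto

lemma Ugr_minus_one_expansion:
  assumes "y \<in> Ugr (-1)"
  shows "y = (\<Sum>K<d. form y (F K) *\<^sub>R E K)"
proof -
  obtain c where c: "y = (\<Sum>L<d. c L *\<^sub>R E L)"
    using span_image_finite_sum[of "{..<d}" y E] assms span_E by auto
  have "form y (F K) = c K" if "K < d" for K
    unfolding c using that
    by (simp add: bilinear_sum_left[OF form_bilinear] bilinear_lmul[OF form_bilinear] form_E_F
        kd_def if_distrib[of "\<lambda>r. r * _"] if_distrib[of "(*) _"] cong: if_cong)
  then show ?thesis by (subst c) (auto intro: sum.cong)
qed

lemma Ugr_one_expansion:
  assumes "y \<in> Ugr 1"
  shows "y = (\<Sum>K<d. form (E K) y *\<^sub>R F K)"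
proof -
  obtain c where c: "y = (\<Sum>L<d. c L *\<^sub>R F L)"
    using span_image_finite_sum[of "{..<d}" y F] assms span_F by auto
  have "form (E K) y = c K" if "K < d" for K
    unfolding c using that
    by (simp add: bilinear_sum_right[OF form_bilinear] bilinear_rmul[OF form_bilinear] form_E_F
        kd_def if_distrib[of "(*) _"] cong: if_cong)
  then show ?thesis by (subst c) (auto intro: sum.cong)
qed

lemma Ugr_minus_one_eqI:
  assumes "x \<in> Ugr (-1)" "y \<in> Ugr (-1)" and "\<And>K. K < d \<Longrightarrow> form x (F K) = form y (F K)"
  shows "x = y"
  using Ugr_minus_one_expansion[OF assms(1)] Ugr_minus_one_expansion[OF assms(2)] assms(3)
  by (metis (no_types, lifting) lessThan_iff sum.cong)

lemma mbr_in_Ugr: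
  assumes B: "\<And>K. K < d \<Longrightarrow> B K \<in> Ugr q"
  shows "set Ks \<subseteq> {..<d} \<Longrightarrow> Ks \<noteq> [] \<Longrightarrow> mbr br B Ks \<in> Ugr (int (length Ks) * q)"
proof (induction Ks)
  case Nil
  then show ?case by simp
next
  case (Cons K Ks)
  show ?case
  proof (cases "Ks = []")
    case True
    with Cons.prems B show ?thesis by simp
  next
    case False
    with Cons have "mbr br B Ks \<in> Ugr (int (length Ks) * q)" by simp
    with Cons.prems B False show ?thesis
      by (auto simp: mbr_Cons algebra_simps intro!: br_in_Ugr)
  qed
qed

lemma mbr_E_in_Ugr: "Ks \<in> idx d k \<Longrightarrow> 1 \<le> k \<Longrightarrow> mbr br E Ks \<in> Ugr (- int k)"
  using mbr_in_Ugr[of E "-1" Ks, OF E_in_Ugr] idx_nonempty[of Ks d k] by (auto simp: idx_def)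

lemma mbr_F_in_Ugr: "Ks \<in> idx d k \<Longrightarrow> 1 \<le> k \<Longrightarrow> mbr br F Ks \<in> Ugr (int k)"
  using mbr_in_Ugr[of F 1 Ks, OF F_in_Ugr] idx_nonempty[of Ks d k] by (auto simp: idx_def)

lemma br_degree_zero_mbr:
  assumes D: "D \<in> Ugr 0" and B: "\<And>K. K < d \<Longrightarrow> B K \<in> Ugr q"
    and DB: "\<And>K. K < d \<Longrightarrow> br D (B K) = (\<Sum>L<d. c K L *\<^sub>R B L)"
  shows "set Ks \<subseteq> {..<d} \<Longrightarrow> Ks \<noteq> [] \<Longrightarrow>
    br D (mbr br B Ks) = (\<Sum>i<length Ks. \<Sum>L<d. c (Ks ! i) L *\<^sub>R mbr br B (Ks[i := L]))"
proof (induction Ks)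
  case Nil
  then show ?case by simp
next
  case (Cons K Ks)
  show ?case
  proof (cases "Ks = []")
    case True
    with Cons.prems DB show ?thesis by simp
  next
    case False
    have K: "K < d" and IH: "br D (mbr br B Ks) =
        (\<Sum>i<length Ks. \<Sum>L<d. c (Ks ! i) L *\<^sub>R mbr br B (Ks[i := L]))"
      using Cons False by auto
    have "br D (mbr br B (K # Ks)) = br (br D (B K)) (mbr br B Ks) + br (B K) (br D (mbr br B Ks))"
      using br_jacobi[OF D B[OF K]] False by (simp add: mbr_Cons)
    also have "\<dots> = (\<Sum>L<d. c K L *\<^sub>R mbr br B (L # Ks))
        + (\<Sum>i<length Ks. \<Sum>L<d. c (Ks ! i) L *\<^sub>R mbr br B (K # Ks[i := L]))"
      using False
      by (simp add: DB[OF K] IH mbr_Cons bilinear_sum_left[OF br_bilinear] bilinear_sum_right[OF br_bilinear]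
          bilinear_lmul[OF br_bilinear] bilinear_rmul[OF br_bilinear])
    also have "\<dots> = (\<Sum>i<length (K # Ks). \<Sum>L<d. c ((K # Ks) ! i) L *\<^sub>R mbr br B ((K # Ks)[i := L]))"
      by (simp only: length_Cons sum.lessThan_Suc_shift) simp
    finally show ?thesis .
  qed
qed

lemma br_degree_zero_mbr_E:
  assumes "D \<in> Ugr 0" "Ks \<in> idx d k" "1 \<le> k"
  shows "br D (mbr br E Ks) =
    (\<Sum>i<k. \<Sum>L<d. form (br D (E (Ks ! i))) (F L) *\<^sub>R mbr br E (Ks[i := L]))"
proof -
  have "br D (E K) = (\<Sum>L<d. form (br D (E K)) (F L) *\<^sub>R E L)" if "K < d" for K
    using Ugr_minus_one_expansion br_in_Ugr[OF assms(1) E_in_Ugr[OF that]] by simp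
  then show ?thesis
    using br_degree_zero_mbr[where B = E and q = "-1" and Ks = Ks
        and c = "\<lambda>K L. form (br D (E K)) (F L)", OF assms(1) E_in_Ugr] assms(2,3) idx_nonempty[OF assms(2,3)]
    by (auto simp: idx_def)
qed

lemma br_degree_zero_mbr_F_in_span:
  assumes D: "D \<in> Ugr 0" and Ks: "Ks \<in> idx d k" "1 \<le> k"
  shows "br D (mbr br F Ks) \<in> span (mbr br F ` idx d k)"
proof -
  have "br D (F K) = (\<Sum>L<d. form (E L) (br D (F K)) *\<^sub>R F L)" if "K < d" for K
    using Ugr_one_expansion br_in_Ugr[OF D F_in_Ugr[OF that]] by simp
  then have "br D (mbr br F Ks) =
      (\<Sum>i<k. \<Sum>L<d. form (E L) (br D (F (Ks ! i))) *\<^sub>R mbr br F (Ks[i := L]))"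
    using br_degree_zero_mbr[where B = F and q = 1 and Ks = Ks
        and c = "\<lambda>K L. form (E L) (br D (F K))", OF D F_in_Ugr] Ks idx_nonempty[OF Ks]
    by (auto simp: idx_def)
  also have "\<dots> \<in> span (mbr br F ` idx d k)"
    using idx_list_update[OF Ks(1)] by (intro span_sum span_scale span_base) auto
  finally show ?thesis .
qed

lemma br_F_span_mbr_F_subset:
  assumes "N < d" "1 \<le> k"
  shows "br (F N) ` span (mbr br F ` idx d k) \<subseteq> span (mbr br F ` idx d (Suc k))"
proof -
  have lin: "linear (br (F N))" using br_bilinear by (simp add: bilinear_def)
  have img: "br (F N) ` mbr br F ` idx d k = (\<lambda>Ls. mbr br F (N # Ls)) ` idx d k"
    using idx_nonempty assms(2) by (auto simp: image_image mbr_Cons intro: image_cong)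
  have "br (F N) ` span (mbr br F ` idx d k) = span ((\<lambda>Ls. mbr br F (N # Ls)) ` idx d k)"
    unfolding img[symmetric] by (rule span_linear_image[OF lin, symmetric])
  also have "\<dots> \<subseteq> span (mbr br F ` idx d (Suc k))"
    using assms(1) by (intro span_mono) (auto simp: Cons_in_idx_iff)
  finally show ?thesis .
qed

lemma br_mbr_F_E_in_span:
  "Ns \<in> idx d (Suc m) \<Longrightarrow> 1 \<le> m \<Longrightarrow> M < d \<Longrightarrow> br (mbr br F Ns) (E M) \<in> span (mbr br F ` idx d m)"
proof (induction Ns arbitrary: m)
  case Nil
  then show ?case by (simp add: idx_def)
next
  case (Cons N Ns)
  let ?S = "span (mbr br F ` idx d m)"
  have N: "N < d" and Ns: "Ns \<in> idx d m" using Cons.prems by (simp_all add: Cons_in_idx_iff)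
  have FN: "F N \<in> Ugr 1" and FNs: "mbr br F Ns \<in> Ugr (int m)" and EM: "E M \<in> Ugr (-1)"
    using F_in_Ugr[OF N] mbr_F_in_Ugr[OF Ns] E_in_Ugr Cons.prems by auto
  have D: "br (F N) (E M) \<in> Ugr 0" by (rule br_in_Ugr[OF FN EM]) simp
  have jacobi: "br (mbr br F (N # Ns)) (E M) =
      br (F N) (br (mbr br F Ns) (E M)) - ssign 1 (int m) *\<^sub>R br (mbr br F Ns) (br (F N) (E M))"
    using br_jacobi[OF FN FNs, of "E M"] idx_nonempty[OF Ns] Cons.prems by (simp add: mbr_Cons)
  have "br (mbr br F Ns) (br (F N) (E M)) = - br (br (F N) (E M)) (mbr br F Ns)"
    using br_antisym[OF FNs D] by simp
  then have second: "br (mbr br F Ns) (br (F N) (E M)) \<in> ?S"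
    using br_degree_zero_mbr_F_in_span[OF D Ns] Cons.prems by (simp add: span_neg)
  have first: "br (F N) (br (mbr br F Ns) (E M)) \<in> ?S"
  proof (cases "m = 1")
    case True
    then have D': "br (mbr br F Ns) (E M) \<in> Ugr 0" using br_in_Ugr[OF FNs EM] by simp
    have "br (F N) (br (mbr br F Ns) (E M)) = - br (br (mbr br F Ns) (E M)) (mbr br F [N])"
      using br_antisym[OF FN D'] by simp
    moreover have "[N] \<in> idx d m" using True N by (simp add: idx_def)
    ultimately show ?thesis
      using br_degree_zero_mbr_F_in_span[OF D', of "[N]" m] True by (simp add: span_neg)
  next
    case False
    then obtain m' where m: "m = Suc m'" and m': "1 \<le> m'"
      using Cons.prems(2) by (cases m) auto
    have "br (mbr br F Ns) (E M) \<in> span (mbr br F ` idx d m')"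
      using Cons.IH[OF _ m'] Ns Cons.prems(3) m by simp
    then show ?thesis
      using br_F_span_mbr_F_subset[OF N m'] m by blast
  qed
  show ?case unfolding jacobi by (intro span_diff span_scale first second)
qed

text \<open>The part of the hypotheses at level k that the argument uses: Q and c play the roles of
  P_k and a_k.\<close>
definition level_pairing :: "nat \<Rightarrow> (nat list \<Rightarrow> nat list \<Rightarrow> real) \<Rightarrow> real \<Rightarrow> bool" where
  "level_pairing k Q c \<longleftrightarrow> 1 \<le> k \<and> c \<noteq> 0 \<and>
     (\<forall>Ms\<in>idx d k. \<forall>Ns\<in>idx d k. form (mbr br E Ms) (mbr br F Ns) = c * Q Ms Ns) \<and>
     (\<forall>Ms\<in>idx d k. mbr br E Ms = (\<Sum>Ns\<in>idx d k. Q Ms Ns *\<^sub>R mbr br E Ns)) \<and>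
     (\<forall>Ns\<in>idx d k. mbr br F Ns = (\<Sum>Ms\<in>idx d k. Q Ms Ns *\<^sub>R mbr br F Ms))"

lemma level_pairingD:
  assumes "level_pairing k Q c"
  shows "1 \<le> k" "c \<noteq> 0"
    "\<And>Ms Ns. Ms \<in> idx d k \<Longrightarrow> Ns \<in> idx d k \<Longrightarrow> form (mbr br E Ms) (mbr br F Ns) = c * Q Ms Ns"
    "\<And>Ms. Ms \<in> idx d k \<Longrightarrow> mbr br E Ms = (\<Sum>Ns\<in>idx d k. Q Ms Ns *\<^sub>R mbr br E Ns)"
    "\<And>Ns. Ns \<in> idx d k \<Longrightarrow> mbr br F Ns = (\<Sum>Ms\<in>idx d k. Q Ms Ns *\<^sub>R mbr br F Ms)"
  using assms unfolding level_pairing_def by blast+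

lemma level_pairing_one: "level_pairing 1 (\<lambda>Ms Ns. kd (hd Ms) (hd Ns)) 1"
proof -
  have "(\<Sum>N<d. kd M N *\<^sub>R B N) = B M" "(\<Sum>N<d. kd N M *\<^sub>R B N) = B M"
    if "M < d" for M and B :: "nat \<Rightarrow> 'u"
    using that by (simp_all add: kd_def if_distrib[of "\<lambda>r. r *\<^sub>R _"] cong: if_cong)
  then show ?thesis
    unfolding level_pairing_def idx_one by (simp add: sum.reindex inj_on_def form_E_F)
qed

lemma level_pairing_nondegenerate:
  assumes lv: "level_pairing k Q c" and y: "y \<in> span (mbr br F ` idx d k)"
    and orth: "\<And>Ls. Ls \<in> idx d k \<Longrightarrow> form (mbr br E Ls) y = 0"
  shows "y = 0"
proof -
  let ?I = "idx d k"
  obtain u where u: "y = (\<Sum>L\<in>?I. u L *\<^sub>R mbr br F L)"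
    using span_image_finite_sum[OF finite_idx y] by blast
  have "y = (\<Sum>L\<in>?I. u L *\<^sub>R (\<Sum>K\<in>?I. Q K L *\<^sub>R mbr br F K))"
    unfolding u by (intro sum.cong refl) (metis level_pairingD(5)[OF lv])
  also have "\<dots> = (\<Sum>L\<in>?I. \<Sum>K\<in>?I. (u L * Q K L) *\<^sub>R mbr br F K)"
    by (simp add: scaleR_sum_right)
  also have "\<dots> = (\<Sum>K\<in>?I. \<Sum>L\<in>?I. (u L * Q K L) *\<^sub>R mbr br F K)"
    by (rule sum.swap)
  also have "\<dots> = (\<Sum>K\<in>?I. (\<Sum>L\<in>?I. u L * Q K L) *\<^sub>R mbr br F K)"
    by (simp add: scaleR_sum_left)
  finally have y_Q: "y = (\<Sum>K\<in>?I. (\<Sum>L\<in>?I. u L * Q K L) *\<^sub>R mbr br F K)" .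
  have "c * (\<Sum>L\<in>?I. u L * Q K L) = form (mbr br E K) y" if K: "K \<in> ?I" for K
    unfolding u using K level_pairingD(3)[OF lv]
    by (simp add: bilinear_sum_right[OF form_bilinear] bilinear_rmul[OF form_bilinear]
        sum_distrib_left algebra_simps)
  then have "(\<Sum>L\<in>?I. u L * Q K L) = 0" if "K \<in> ?I" for K
    using that orth level_pairingD(2)[OF lv] by simp
  then show ?thesis by (simp add: y_Q)
qed

text \<open>Since E_(M Ls) = [E_M, E_Ls], reproducing the E-brackets of level k reproduces
  (P_(k+1))_(M Ls)^Ns.\<close>
lemma level_pairing_Cons:
  assumes lv1: "level_pairing (Suc k) Q c" and lv: "level_pairing k Q' c'"
    and M: "M < d" and Ls: "Ls \<in> idx d k" and Ns: "Ns \<in> idx d (Suc k)"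
  shows "Q (M # Ls) Ns = (\<Sum>K\<in>idx d k. Q (M # K) Ns * Q' Ls K)"
proof -
  have ne: "Ks \<in> idx d k \<Longrightarrow> Ks \<noteq> []" for Ks using idx_nonempty level_pairingD(1)[OF lv] by blast
  have cons: "Ks \<in> idx d k \<Longrightarrow> M # Ks \<in> idx d (Suc k)" for Ks using M by (simp add: Cons_in_idx_iff)
  have "c * Q (M # Ls) Ns = form (br (E M) (mbr br E Ls)) (mbr br F Ns)"
    using level_pairingD(3)[OF lv1 cons[OF Ls] Ns] ne[OF Ls] by (simp add: mbr_Cons)
  also have "\<dots> = (\<Sum>K\<in>idx d k. Q' Ls K * form (mbr br E (M # K)) (mbr br F Ns))"
    by (subst level_pairingD(4)[OF lv Ls])
      (simp add: bilinear_sum_right[OF br_bilinear] bilinear_rmul[OF br_bilinear]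
        bilinear_sum_left[OF form_bilinear] bilinear_lmul[OF form_bilinear] mbr_Cons ne)
  also have "\<dots> = c * (\<Sum>K\<in>idx d k. Q (M # K) Ns * Q' Ls K)"
    using level_pairingD(3)[OF lv1 cons Ns] by (simp add: sum_distrib_left algebra_simps)
  finally show ?thesis using level_pairingD(2)[OF lv1] by simp
qed

lemma Xcomp_in_Ugr:
  assumes "M < d" "Ns \<in> idx d k" "Ps \<in> idx d k" "1 \<le> k"
  shows "Xcomp br a E F k M Ns Ps \<in> Ugr (-1)"
proof -
  have "br (mbr br E Ns) (mbr br F Ps) \<in> Ugr 0"
    using br_in_Ugr[OF mbr_E_in_Ugr mbr_F_in_Ugr] assms(2-4) by simp
  then show ?thesis
    unfolding Xcomp_def using subspace_Ugr[of "-1"] br_in_Ugr[OF E_in_Ugr[OF assms(1)]]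
    by (simp add: subspace_scale)
qed

text \<open>Invariance moves the brackets so that D = [E_M, F^Q] acts on E_Ns.\<close>
lemma form_Xcomp_F:
  assumes lv: "level_pairing k Q (a k)" and M: "M < d" and Q0: "Q0 < d"
    and Ns: "Ns \<in> idx d k" and Ps: "Ps \<in> idx d k"
  shows "form (Xcomp br a E F k M Ns Ps) (F Q0) =
    - (\<Sum>i<k. \<Sum>K<d. form (br (br (E M) (F Q0)) (E (Ns ! i))) (F K) * Q (Ns[i := K]) Ps)"
proof -
  define D where "D = br (E M) (F Q0)"
  define A where "A = mbr br E Ns"
  define B where "B = mbr br F Ps"
  have k: "1 \<le> k" and ak: "a k \<noteq> 0" using level_pairingD[OF lv] by auto
  have D0: "D \<in> Ugr 0" unfolding D_def by (rule br_in_Ugr[OF E_in_Ugr[OF M] F_in_Ugr[OF Q0]]) simp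
  have A: "A \<in> Ugr (- int k)" and B: "B \<in> Ugr (int k)"
    unfolding A_def B_def using mbr_E_in_Ugr[OF Ns k] mbr_F_in_Ugr[OF Ps k] .
  have AB: "br A B \<in> Ugr 0" by (rule br_in_Ugr[OF A B]) simp
  have "form (br (E M) (br A B)) (F Q0) = - form (br (br A B) (E M)) (F Q0)"
    using br_antisym[OF E_in_Ugr[OF M] AB] by (simp add: bilinear_lneg[OF form_bilinear])
  also have "\<dots> = - form A (br B D)"
    unfolding D_def by (simp add: form_invariant)
  also have "\<dots> = - form (br D A) B"
    using br_antisym[OF B D0] br_antisym[OF A D0]
    by (simp add: bilinear_rneg[OF form_bilinear] bilinear_lneg[OF form_bilinear]
        form_invariant[symmetric])
  also have "\<dots> = - (\<Sum>i<k. \<Sum>L<d. form (br D (E (Ns ! i))) (F L) * form (mbr br E (Ns[i := L])) B)"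
    unfolding A_def br_degree_zero_mbr_E[OF D0 Ns k]
    by (simp add: bilinear_sum_left[OF form_bilinear] bilinear_lmul[OF form_bilinear])
  also have "\<dots> = - a k * (\<Sum>i<k. \<Sum>L<d. form (br D (E (Ns ! i))) (F L) * Q (Ns[i := L]) Ps)"
    unfolding B_def using level_pairingD(3)[OF lv idx_list_update[OF Ns] Ps]
    by (simp add: sum_distrib_left sum_negf algebra_simps)
  finally show ?thesis
    using ak by (simp add: Xcomp_def A_def B_def D_def bilinear_lmul[OF form_bilinear])
qed

lemma form_Xcomp_one_F:
  assumes "a 1 = 1" "M < d" "N < d" "K < d" "Q0 < d"
  shows "form (Xcomp br a E F 1 M [N] [K]) (F Q0) = - form (br (br (E M) (F Q0)) (E N)) (F K)"
  using form_Xcomp_F[of 1 "\<lambda>Ms Ns. kd (hd Ms) (hd Ns)" a M Q0 "[N]" "[K]"] level_pairing_one assms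
  by (simp add: idx_def sum_kd_left)

lemma Xcomp_expansion:
  assumes lv: "level_pairing p Q (a p)" and a1: "a 1 = 1"
    and M: "M < d" and Ns: "Ns \<in> idx d p" and Ps: "Ps \<in> idx d p"
  shows "Xcomp br a E F p M Ns Ps =
    (\<Sum>Ks\<in>idx d p. Q Ks Ps *\<^sub>R
       (\<Sum>i<p. (\<Prod>j\<in>{..<p} - {i}. kd (Ns ! j) (Ks ! j)) *\<^sub>R Xcomp br a E F 1 M [Ns ! i] [Ks ! i]))"
    (is "?X = ?R")
proof (rule sym, rule Ugr_minus_one_eqI)
  have p: "1 \<le> p" using level_pairingD(1)[OF lv] .
  show "?X \<in> Ugr (-1)" by (rule Xcomp_in_Ugr[OF M Ns Ps p])
  show "?R \<in> Ugr (-1)"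
    using subspace_Ugr[of "-1"] idx_nth_less[OF Ns] idx_nth_less M
    by (intro subspace_sum subspace_scale Xcomp_in_Ugr) (auto simp: idx_def)
  fix Q0 assume Q0: "Q0 < d"
  define c where "c N K = form (br (br (E M) (F Q0)) (E N)) (F K)" for N K
  have X1: "form (Xcomp br a E F 1 M [Ns ! i] [Ks ! i]) (F Q0) = - c (Ns ! i) (Ks ! i)"
    if "Ks \<in> idx d p" "i < p" for Ks i
    using form_Xcomp_one_F[where a = a, OF a1 M idx_nth_less[OF Ns that(2)] idx_nth_less[OF that]]
      Q0 by (simp add: c_def)
  have "form ?R (F Q0) = (\<Sum>Ks\<in>idx d p. Q Ks Ps * (\<Sum>i<p. (\<Prod>j\<in>{..<p} - {i}. kd (Ns ! j) (Ks ! j))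
      * form (Xcomp br a E F 1 M [Ns ! i] [Ks ! i]) (F Q0)))"
    by (simp add: bilinear_sum_left[OF form_bilinear] bilinear_lmul[OF form_bilinear])
  also have "\<dots> = (\<Sum>Ks\<in>idx d p. Q Ks Ps * (\<Sum>i<p.
      (\<Prod>j\<in>{..<p} - {i}. kd (Ns ! j) (Ks ! j)) * - c (Ns ! i) (Ks ! i)))"
    by (intro sum.cong refl arg_cong2[where f = "(*)"]) (rule X1; simp)
  also have "\<dots> = (\<Sum>i<p. \<Sum>Ks\<in>idx d p.
      Q Ks Ps * (\<Prod>j\<in>{..<p} - {i}. kd (Ns ! j) (Ks ! j)) * - c (Ns ! i) (Ks ! i))"
    by (simp add: sum_distrib_left mult.assoc sum.swap[of _ "idx d p"])
  also have "\<dots> = (\<Sum>i<p. \<Sum>K<d. Q (Ns[i := K]) Ps * - c (Ns ! i) K)"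
  proof (rule sum.cong[OF refl])
    fix i assume "i \<in> {..<p}"
    then show "(\<Sum>Ks\<in>idx d p.
          Q Ks Ps * (\<Prod>j\<in>{..<p} - {i}. kd (Ns ! j) (Ks ! j)) * - c (Ns ! i) (Ks ! i))
        = (\<Sum>K<d. Q (Ns[i := K]) Ps * - c (Ns ! i) K)"
      using sum_idx_kd_except[OF _ Ns, of i "\<lambda>Ks. Q Ks Ps" "\<lambda>K. - c (Ns ! i) K"] by simp
  qed
  also have "\<dots> = form ?X (F Q0)"
    unfolding form_Xcomp_F[where a = a and k = p, OF lv M Q0 Ns Ps] c_def
    by (simp add: sum_negf algebra_simps)
  finally show "form ?R (F Q0) = form ?X (F Q0)" .
qed

lemma br_mbr_F_E:
  assumes lv1: "level_pairing (Suc k) Q (a (Suc k))" and lv: "level_pairing k Q' (a k)"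
    and Ns: "Ns \<in> idx d (Suc k)" and M: "M < d"
  shows "br (mbr br F Ns) (E M) =
    - ((a (Suc k) / a k) *\<^sub>R (\<Sum>Ks\<in>idx d (Suc k). (Q Ks Ns * kd M (hd Ks)) *\<^sub>R mbr br F (tl Ks)))"
proof -
  let ?R = "\<Sum>Ks\<in>idx d (Suc k). (Q Ks Ns * kd M (hd Ks)) *\<^sub>R mbr br F (tl Ks)"
  let ?y = "br (mbr br F Ns) (E M) + (a (Suc k) / a k) *\<^sub>R ?R"
  have k: "1 \<le> k" and ak: "a k \<noteq> 0" using level_pairingD[OF lv] by auto
  have "?R \<in> span (mbr br F ` idx d k)"
    using tl_in_idx by (intro span_sum span_scale span_base) auto
  then have "?y \<in> span (mbr br F ` idx d k)"
    using br_mbr_F_E_in_span[OF Ns k M] by (intro span_add span_scale)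
  moreover have "form (mbr br E Ls) ?y = 0" if Ls: "Ls \<in> idx d k" for Ls
  proof -
    define EL where "EL = mbr br E Ls"
    have EL: "EL \<in> Ugr (- int k)" unfolding EL_def by (rule mbr_E_in_Ugr[OF Ls k])
    have "br EL (mbr br F Ns) \<in> Ugr 1"
      by (rule br_in_Ugr[OF EL mbr_F_in_Ugr[OF Ns]]) simp_all
    then have "form EL (br (mbr br F Ns) (E M)) = - form (br (E M) EL) (mbr br F Ns)"
      using form_supersymmetric[OF _ E_in_Ugr[OF M]]
      by (simp add: form_invariant[symmetric] ssign_def)
    also have "\<dots> = - (a (Suc k) * Q (M # Ls) Ns)"
      unfolding EL_def using level_pairingD(3)[OF lv1 _ Ns, of "M # Ls"] M Ls idx_nonempty[OF Ls k]
      by (simp add: mbr_Cons Cons_in_idx_iff)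
    finally have first: "form EL (br (mbr br F Ns) (E M)) = - (a (Suc k) * Q (M # Ls) Ns)" .
    have "form EL ?R = (\<Sum>Ks\<in>idx d (Suc k). kd M (hd Ks) * (a k * (Q Ks Ns * Q' Ls (tl Ks))))"
      unfolding EL_def using level_pairingD(3)[OF lv Ls tl_in_idx]
      by (simp add: bilinear_sum_right[OF form_bilinear] bilinear_rmul[OF form_bilinear] mult_ac
          cong: sum.cong)
    also have "\<dots> = a k * Q (M # Ls) Ns"
      by (simp add: sum_idx_kd_hd[OF M] level_pairing_Cons[OF lv1 lv M Ls Ns] sum_distrib_left)
    finally have second: "form EL ?R = a k * Q (M # Ls) Ns" .
    show ?thesis
      using first second ak
      by (simp add: EL_def[symmetric] bilinear_radd[OF form_bilinear]
          bilinear_rmul[OF form_bilinear])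
  qed
  ultimately have "?y = 0" by (rule level_pairing_nondegenerate[OF lv])
  then show ?thesis by (simp add: eq_neg_iff_add_eq_0)
qed

lemma Ycomp_recursion:
  assumes lv1: "level_pairing (Suc k) Q (a (Suc k))" and lv: "level_pairing k Q' (a k)"
    and Ns: "Ns \<in> idx d (Suc k)" and Ms: "Ms \<in> idx d (Suc (Suc k))"
  shows "Ycomp br a E F (Suc k) Ns Ms =
          - (\<Sum>Ks\<in>idx d (Suc k). (Q Ks Ns * kd (hd Ms) (hd Ks)) *\<^sub>R Ycomp br a E F k (tl Ks) (tl Ms))
          - Xcomp br a E F (Suc k) (hd Ms) (tl Ms) Ns"
proof -
  obtain M Ms' where Ms_eq: "Ms = M # Ms'" and M: "M < d" and Ms': "Ms' \<in> idx d (Suc k)"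
    using Ms by (cases Ms) (auto simp: idx_def)
  define Fn where "Fn = mbr br F Ns"
  define E' where "E' = mbr br E Ms'"
  have Fn: "Fn \<in> Ugr (int (Suc k))" and E': "E' \<in> Ugr (- int (Suc k))"
    unfolding Fn_def E'_def using mbr_F_in_Ugr[OF Ns] mbr_E_in_Ugr[OF Ms'] by auto
  have "br Fn (br (E M) E') = br (br Fn (E M)) E' - br (E M) (br E' Fn)"
    using br_jacobi[OF Fn E_in_Ugr[OF M], of E'] br_antisym[OF Fn E']
    by (simp add: ssign_def bilinear_rneg[OF br_bilinear] bilinear_rmul[OF br_bilinear])
  moreover have "br (br Fn (E M)) E' =
      - ((a (Suc k) / a k) *\<^sub>R
          (\<Sum>Ks\<in>idx d (Suc k). (Q Ks Ns * kd M (hd Ks)) *\<^sub>R br (mbr br F (tl Ks)) E'))"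
    unfolding Fn_def br_mbr_F_E[OF lv1 lv Ns M]
    by (simp add: bilinear_lneg[OF br_bilinear] bilinear_lmul[OF br_bilinear]
        bilinear_sum_left[OF br_bilinear])
  ultimately show ?thesis
    using level_pairingD(2)[OF lv1] idx_nonempty[OF Ms']
    by (simp add: Ms_eq Ycomp_def Xcomp_def Fn_def E'_def mbr_Cons
        scaleR_diff_right scaleR_sum_right)
qed

lemma Ycomp_one:
  assumes "a 1 = 1" "M < d" "N < d" "Q < d"
  shows "Ycomp br a E F 1 [M] [N, Q] = - Xcomp br a E F 1 N [Q] [M] - Xcomp br a E F 1 Q [N] [M]"
proof -
  have EN: "E N \<in> Ugr (-1)" and EQ: "E Q \<in> Ugr (-1)" and FM: "F M \<in> Ugr 1"
    using E_in_Ugr F_in_Ugr assms by auto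
  have "br (E N) (E Q) \<in> Ugr (-2)" by (rule br_in_Ugr[OF EN EQ]) simp
  then show ?thesis
    using br_jacobi[OF EN EQ, of "F M"] br_antisym[OF FM] assms(1)
    by (simp add: Ycomp_def Xcomp_def ssign_def algebra_simps)
qed

end

theorem corollary1:
  fixes n :: nat and br :: "'u::real_vector \<Rightarrow> 'u \<Rightarrow> 'u" and Ugr :: "int \<Rightarrow> 'u set"
    and e f h :: "nat \<Rightarrow> 'u" and form :: "'u \<Rightarrow> 'u \<Rightarrow> real"
    and d :: nat and E F :: "nat \<Rightarrow> 'u"
    and P :: "nat \<Rightarrow> nat list \<Rightarrow> nat list \<Rightarrow> real" and a :: "nat \<Rightarrow> real" and p :: nat
  assumes n_range: "4 \<le> n" "n \<le> 8"
    and U: "is_U n br Ugr e f h"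
    and frm: "is_U_form n br Ugr e f h form"
    and bases: "dual_bases Ugr form d E F"
    and proj: "\<forall>k\<in>{2..p}. is_projector br d E F k (P k)"
    and p2: "2 \<le> p"
    and a1: "a 1 = 1"
    and a_nz: "\<forall>k\<in>{2..p}. a k \<noteq> 0"
    and hyp: "\<forall>k\<in>{2..p}. \<forall>Ms\<in>idx d k. \<forall>Ns\<in>idx d k.
                form (mbr br E Ms) (mbr br F Ns) = a k * P k Ms Ns"
  shows
    "(\<forall>M<d. \<forall>Ns\<in>idx d p. \<forall>Ps\<in>idx d p.
        Xcomp br a E F p M Ns Ps =
          (\<Sum>Ks\<in>idx d p. P p Ks Ps *\<^sub>R
             (\<Sum>i<p. (\<Prod>j\<in>{..<p} - {i}. kd (Ns ! j) (Ks ! j)) *\<^sub>R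
                        Xcomp br a E F 1 M [Ns ! i] [Ks ! i]))) \<and>
     (\<forall>Ns\<in>idx d p. \<forall>Ms\<in>idx d (p + 1).
        Ycomp br a E F p Ns Ms =
          - (\<Sum>Ks\<in>idx d p. (P p Ks Ns * kd (hd Ms) (hd Ks)) *\<^sub>R
               Ycomp br a E F (p - 1) (tl Ks) (tl Ms))
          - Xcomp br a E F p (hd Ms) (tl Ms) Ns) \<and>
     (\<forall>M<d. \<forall>N<d. \<forall>Q<d.
        Ycomp br a E F 1 [M] [N, Q] =
          - Xcomp br a E F 1 N [Q] [M] - Xcomp br a E F 1 Q [N] [M])"
proof -
  interpret dual_graded_superalgebra br Ugr form d E F
    using U frm bases unfolding is_U_def is_U_form_def by unfold_locales blast+
  have level: "level_pairing k (P k) (a k)" if "k \<in> {2..p}" for k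
  proof -
    have "1 \<le> k" using that by simp
    with bspec[OF a_nz that] bspec[OF hyp that] bspec[OF proj that]
    show ?thesis unfolding level_pairing_def is_projector_def by blast
  qed
  define k where "k = p - 1"
  have p_eq: "p = Suc k" and k: "1 \<le> k" using p2 by (simp_all add: k_def)
  define Q' where "Q' = (if k = 1 then (\<lambda>Ms Ns. kd (hd Ms) (hd Ns)) else P k)"
  have lv1: "level_pairing (Suc k) (P (Suc k)) (a (Suc k))" using level p_eq p2 by simp
  have lv: "level_pairing k Q' (a k)"
    using level_pairing_one a1 level[of k] k p_eq unfolding Q'_def by auto
  show ?thesis
    unfolding p_eq diff_Suc_1 Suc_eq_plus1[symmetric]
    by (intro conjI allI ballI impI;
        rule Xcomp_expansion[OF lv1 a1] Ycomp_recursion[OF lv1 lv] Ycomp_one[where a = a, OF a1];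
        assumption)
qed

end
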